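(* Let $\Phi$ be an irreducible reduced root system with basis $\Delta$, Weyl group $W$ with length function $l$, highest root $\tilde\alpha$. For every positive long root $\alpha$, $$l(x_\alpha)=\frac{l(s_{\tilde\alpha})-l(s_\alpha)}{2}=\mathrm{ht}^\vee(\tilde\alpha)-\mathrm{ht}^\vee(\alpha),\qquad l(x_{-\alpha})=\frac{l(s_{\tilde\alpha})+l(s_\alpha)}{2}=\mathrm{ht}^\vee(\tilde\alpha)+\mathrm{ht}^\vee(\alpha)-1.$$
   Context: Fix a $W$-invariant scalar product with minimal squared root length $1$ and maximal squared root length $r$; long roots have squared length $r$; $\Delta_{\mathrm{lg}},\Delta_{\mathrm{sh}}$ are the long and short simple roots. For a long root $\gamma=\sum_{\beta\in\Delta}n_\beta\beta$, $\mathrm{ht}^\vee(\gamma)=\sum_{\beta\in\Delta_{\mathrm{lg}}}n_\beta+\frac1r\sum_{\beta\in\Delta_{\mathrm{sh}}}n_\beta$. $\tilde I=\{\beta\in\Delta:(\tilde\alpha|\beta)=0\}$, $X_{\tilde I}=\{w\in W:w(\Phi^+_{\tilde I})\subset\Phi^+\}$ where $\Phi_{\tilde I}^+$ are the positive roots in the span of $\tilde I$; for a long root $\beta$, $x_\beta$ is the unique element of $X_{\tilde I}$ with $x_\beta(\tilde\alpha)=\beta$. *)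

theory Defs
  imports "HOL-Analysis.Analysis"
begin

definition root_refl :: "'a::real_inner \<Rightarrow> 'a \<Rightarrow> 'a" where
  "root_refl \<alpha> v = v - (2 * (v \<bullet> \<alpha>) / (\<alpha> \<bullet> \<alpha>)) *\<^sub>R \<alpha>"

definition root_system :: "'a::euclidean_space set \<Rightarrow> bool" where
  "root_system \<Phi> \<longleftrightarrow> finite \<Phi> \<and> 0 \<notin> \<Phi> \<and> span \<Phi> = UNIV \<and>
     (\<forall>\<alpha>\<in>\<Phi>. root_refl \<alpha> ` \<Phi> = \<Phi>) \<and>
     (\<forall>\<alpha>\<in>\<Phi>. \<forall>\<beta>\<in>\<Phi>. 2 * (\<beta> \<bullet> \<alpha>) / (\<alpha> \<bullet> \<alpha>) \<in> \<int>)"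

definition reduced_rs :: "'a::real_inner set \<Rightarrow> bool" where
  "reduced_rs \<Phi> \<longleftrightarrow> (\<forall>\<alpha>\<in>\<Phi>. \<forall>c::real. c *\<^sub>R \<alpha> \<in> \<Phi> \<longrightarrow> c = 1 \<or> c = -1)"

definition irreducible_rs :: "'a::real_inner set \<Rightarrow> bool" where
  "irreducible_rs \<Phi> \<longleftrightarrow> \<Phi> \<noteq> {} \<and>
     (\<forall>A B. A \<union> B = \<Phi> \<and> (\<forall>a\<in>A. \<forall>b\<in>B. a \<bullet> b = 0) \<longrightarrow> A = {} \<or> B = {})"

inductive_set weyl_group :: "'a::real_inner set \<Rightarrow> ('a \<Rightarrow> 'a) set" for \<Phi> where
  wg_id: "id \<in> weyl_group \<Phi>"
| wg_step: "\<alpha> \<in> \<Phi> \<Longrightarrow> w \<in> weyl_group \<Phi> \<Longrightarrow> root_refl \<alpha> \<circ> w \<in> weyl_group \<Phi>"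

definition nonneg_comb :: "'a::real_vector set \<Rightarrow> 'a \<Rightarrow> bool" where
  "nonneg_comb \<Delta> v \<longleftrightarrow> (\<exists>c::'a \<Rightarrow> nat. v = (\<Sum>\<delta>\<in>\<Delta>. real (c \<delta>) *\<^sub>R \<delta>))"

definition pos_roots :: "'a::real_vector set \<Rightarrow> 'a set \<Rightarrow> 'a set" where
  "pos_roots \<Phi> \<Delta> = {\<beta>\<in>\<Phi>. nonneg_comb \<Delta> \<beta>}"

definition is_base :: "'a::real_vector set \<Rightarrow> 'a set \<Rightarrow> bool" where
  "is_base \<Phi> \<Delta> \<longleftrightarrow> \<Delta> \<subseteq> \<Phi> \<and> independent \<Delta> \<and>
     (\<forall>\<beta>\<in>\<Phi>. nonneg_comb \<Delta> \<beta> \<or> nonneg_comb \<Delta> (- \<beta>))"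

definition highest_root :: "'a::real_vector set \<Rightarrow> 'a set \<Rightarrow> 'a \<Rightarrow> bool" where
  "highest_root \<Phi> \<Delta> a \<longleftrightarrow> a \<in> \<Phi> \<and> (\<forall>\<beta>\<in>\<Phi>. nonneg_comb \<Delta> (a - \<beta>))"

definition base_coeff :: "'a::real_vector set \<Rightarrow> 'a \<Rightarrow> 'a \<Rightarrow> real" where
  "base_coeff \<Delta> \<gamma> = (THE c. (\<forall>\<delta>. \<delta> \<notin> \<Delta> \<longrightarrow> c \<delta> = 0) \<and> \<gamma> = (\<Sum>\<delta>\<in>\<Delta>. c \<delta> *\<^sub>R \<delta>))"

definition max_sq :: "'a::real_inner set \<Rightarrow> real" where
  "max_sq \<Phi> = Max ((\<lambda>\<beta>. \<beta> \<bullet> \<beta>) ` \<Phi>)"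

definition min_sq :: "'a::real_inner set \<Rightarrow> real" where
  "min_sq \<Phi> = Min ((\<lambda>\<beta>. \<beta> \<bullet> \<beta>) ` \<Phi>)"

text \<open>Ratio r of squared lengths of long to short roots (= maximal squared
  root length when the minimal one is normalized to 1).\<close>
definition length_ratio :: "'a::real_inner set \<Rightarrow> real" where
  "length_ratio \<Phi> = max_sq \<Phi> / min_sq \<Phi>"

definition long_root :: "'a::real_inner set \<Rightarrow> 'a \<Rightarrow> bool" where
  "long_root \<Phi> \<beta> \<longleftrightarrow> \<beta> \<in> \<Phi> \<and> \<beta> \<bullet> \<beta> = max_sq \<Phi>"

definition long_simple :: "'a::real_inner set \<Rightarrow> 'a set \<Rightarrow> 'a set" where
  "long_simple \<Phi> \<Delta> = {\<delta>\<in>\<Delta>. long_root \<Phi> \<delta>}"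

definition short_simple :: "'a::real_inner set \<Rightarrow> 'a set \<Rightarrow> 'a set" where
  "short_simple \<Phi> \<Delta> = \<Delta> - long_simple \<Phi> \<Delta>"

definition htv :: "'a::real_inner set \<Rightarrow> 'a set \<Rightarrow> 'a \<Rightarrow> real" where
  "htv \<Phi> \<Delta> \<gamma> = (\<Sum>\<delta>\<in>long_simple \<Phi> \<Delta>. base_coeff \<Delta> \<gamma> \<delta>)
     + (1 / length_ratio \<Phi>) * (\<Sum>\<delta>\<in>short_simple \<Phi> \<Delta>. base_coeff \<Delta> \<gamma> \<delta>)"

definition simple_word :: "'a::real_inner list \<Rightarrow> 'a \<Rightarrow> 'a" where
  "simple_word ds = foldr (\<lambda>\<delta> f. root_refl \<delta> \<circ> f) ds id"

definition weyl_length :: "'a::real_inner set \<Rightarrow> ('a \<Rightarrow> 'a) \<Rightarrow> nat" where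
  "weyl_length \<Delta> w = (LEAST k. \<exists>ds. length ds = k \<and> set ds \<subseteq> \<Delta> \<and> simple_word ds = w)"

definition I_tilde :: "'a::real_inner set \<Rightarrow> 'a \<Rightarrow> 'a set" where
  "I_tilde \<Delta> a = {\<beta>\<in>\<Delta>. a \<bullet> \<beta> = 0}"

definition X_tilde :: "'a::real_inner set \<Rightarrow> 'a set \<Rightarrow> 'a \<Rightarrow> ('a \<Rightarrow> 'a) set" where
  "X_tilde \<Phi> \<Delta> a = {w \<in> weyl_group \<Phi>.
      w ` {\<beta> \<in> pos_roots \<Phi> \<Delta>. \<beta> \<in> span (I_tilde \<Delta> a)} \<subseteq> pos_roots \<Phi> \<Delta>}"

definition x_elem :: "'a::real_inner set \<Rightarrow> 'a set \<Rightarrow> 'a \<Rightarrow> 'a \<Rightarrow> ('a \<Rightarrow> 'a)" where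
  "x_elem \<Phi> \<Delta> a \<beta> = (THE w. w \<in> X_tilde \<Phi> \<Delta> a \<and> w a = \<beta>)"

end

theory Submission
  imports Defs
begin

text \<open>
  Lengths are computed as numbers of inversions, i.e.\ of positive roots sent to negative ones.
  Long roots have Cartan integer \<open>\<plusminus>1\<close> against any non-proportional, non-orthogonal root, so a
  simple reflection changes the dual height of a long root by exactly one whenever it moves it.
  For \<open>s\<^sub>\<alpha>\<close> this gives, by induction on the height, \<open>l(s\<^sub>\<alpha>) = 2 ht\<^sup>\<or>(\<alpha>) - 1\<close>, writing
  \<open>s\<^sub>\<alpha> = s\<^sub>d s\<^bsub>s\<^sub>d \<alpha>\<^esub> s\<^sub>d\<close>. For \<open>x \<in> X\<close> different from the identity, the dominance of
  \<open>\<alpha>h\<close> yields a simple root \<open>d\<close>, image of a negative root, with \<open>x \<alpha>h \<bullet> d < 0\<close>; then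
  \<open>s\<^sub>d x \<in> X\<close> has one inversion less and \<open>ht\<^sup>\<or>(s\<^sub>d x \<alpha>h) = ht\<^sup>\<or>(x \<alpha>h) + 1\<close> (unless
  \<open>x \<alpha>h = - d\<close>), whence \<open>l(x\<^sub>\<beta>) = ht\<^sup>\<or>(\<alpha>h) - ht\<^sup>\<or>(\<beta>) - [\<beta> < 0]\<close>. The same descent shows that
  an element of \<open>X\<close> is determined by its value on \<open>\<alpha>h\<close>, and \<open>x\<^sub>\<beta>\<close> exists because \<open>W\<close> is
  transitive on long roots and minimal representatives lie in \<open>X\<close>.
\<close>

section \<open>Reflections and the Weyl group\<close>

lemma inner_self_nonpos_iff [simp]: "x \<bullet> x \<le> 0 \<longleftrightarrow> x = 0"
  for x :: "'a::real_inner"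
  by (metis inner_eq_zero_iff inner_ge_zero order.antisym order.refl)

lemma root_refl_add: "root_refl a (x + y) = root_refl a x + root_refl a y"
  by (simp add: root_refl_def inner_add_left add_divide_distrib algebra_simps)

lemma root_refl_scaleR: "root_refl a (c *\<^sub>R x) = c *\<^sub>R root_refl a x"
  by (simp add: root_refl_def algebra_simps)

lemma linear_root_refl: "linear (root_refl a)"
  by (rule linearI) (simp_all add: root_refl_add root_refl_scaleR)

lemma root_refl_uminus: "root_refl a (- x) = - root_refl a x"
  using linear_neg[OF linear_root_refl] .

lemma inner_root_refl:
  assumes "a \<noteq> 0"
  shows "root_refl a x \<bullet> root_refl a y = x \<bullet> y"
  using assms by (simp add: root_refl_def inner_diff_left inner_diff_right field_simps inner_commute)

lemma orthogonal_transformation_root_refl: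
  "a \<noteq> 0 \<Longrightarrow> orthogonal_transformation (root_refl a)"
  by (simp add: orthogonal_transformation_def linear_root_refl inner_root_refl)

lemma root_refl_self: "a \<noteq> 0 \<Longrightarrow> root_refl a a = - a"
  by (simp add: root_refl_def scaleR_2)

lemma root_refl_orthogonal: "x \<bullet> a = 0 \<Longrightarrow> root_refl a x = x"
  by (simp add: root_refl_def)

lemma root_refl_root_refl:
  assumes "a \<noteq> 0"
  shows "root_refl a (root_refl a x) = x"
  using assms by (simp add: root_refl_def inner_diff_left algebra_simps field_simps)

lemma root_refl_image_iff: "a \<noteq> 0 \<Longrightarrow> x \<in> root_refl a ` S \<longleftrightarrow> root_refl a x \<in> S"
  by (metis image_iff root_refl_root_refl)

lemma root_refl_comp_self: "a \<noteq> 0 \<Longrightarrow> root_refl a \<circ> root_refl a = id"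
  by (simp add: fun_eq_iff root_refl_root_refl)

lemma root_refl_uminus_root: "root_refl (- a) = root_refl a"
  by (simp add: fun_eq_iff root_refl_def)

lemma orthogonal_transformation_root_refl_conj:
  assumes "orthogonal_transformation u"
  shows "u \<circ> root_refl a = root_refl (u a) \<circ> u"
proof -
  have "linear u" and "\<And>x y. u x \<bullet> u y = x \<bullet> y"
    using assms by (auto simp: orthogonal_transformation_def)
  then show ?thesis
    by (simp add: fun_eq_iff root_refl_def linear_diff linear_scale)
qed

lemma root_refl_conj_root_refl:
  assumes "d \<noteq> 0"
  shows "root_refl d \<circ> root_refl b \<circ> root_refl d = root_refl (root_refl d b)"
  using orthogonal_transformation_root_refl_conj[OF orthogonal_transformation_root_refl[OF assms], of b]
  by (metis (no_types, lifting) assms comp_assoc comp_id root_refl_comp_self)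

text \<open>The difference between a vector and its mirror image is a multiple of the root.\<close>
lemma orthogonal_if_root_refl_stable:
  assumes stable: "\<And>u. u \<in> S \<Longrightarrow> root_refl g u \<in> span S"
    and g: "g \<notin> span S" and u: "u \<in> S"
  shows "g \<bullet> u = 0"
proof (rule ccontr)
  assume nonorth: "g \<bullet> u \<noteq> 0"
  define c where "c = 2 * (u \<bullet> g) / (g \<bullet> g)"
  have "c \<noteq> 0" using nonorth by (auto simp: c_def inner_commute)
  have "c *\<^sub>R g = u - root_refl g u" by (simp add: root_refl_def c_def)
  also have "\<dots> \<in> span S" using stable u by (simp add: span_base span_diff)
  finally have "(1 / c) *\<^sub>R (c *\<^sub>R g) \<in> span S" by (rule span_scale)
  then show False using \<open>c \<noteq> 0\<close> g by simp
qed

lemma simple_word_Nil [simp]: "simple_word [] = id"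
  by (simp add: simple_word_def)

lemma simple_word_Cons [simp]: "simple_word (d # ds) = root_refl d \<circ> simple_word ds"
  by (simp add: simple_word_def)

lemma simple_word_append: "simple_word (ds @ es) = simple_word ds \<circ> simple_word es"
  by (induction ds) auto

lemma simple_word_rev_inverse:
  "0 \<notin> set ds \<Longrightarrow> simple_word ds \<circ> simple_word (rev ds) = id"
proof (induction ds)
  case (Cons d ds)
  then have "d \<noteq> 0" and "\<And>y. simple_word ds (simple_word (rev ds) y) = y"
    by (auto simp: fun_eq_iff)
  then show ?case
    by (simp add: simple_word_append fun_eq_iff root_refl_root_refl)
qed simp

lemma collinear_if_Cauchy_Schwarz_eq:
  fixes x y :: "'a::real_inner"
  assumes eq: "(x \<bullet> y)\<^sup>2 = (x \<bullet> x) * (y \<bullet> y)" and "x \<noteq> 0"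
  shows "y = ((x \<bullet> y) / (x \<bullet> x)) *\<^sub>R x"
proof -
  let ?z = "(x \<bullet> x) *\<^sub>R y - (x \<bullet> y) *\<^sub>R x"
  have "?z \<bullet> ?z = (x \<bullet> x) * ((x \<bullet> x) * (y \<bullet> y) - (x \<bullet> y)\<^sup>2)"
    by (simp add: power2_eq_square inner_commute algebra_simps)
  then have "(x \<bullet> x) *\<^sub>R y = (x \<bullet> y) *\<^sub>R x" using eq by simp
  then have "(1 / (x \<bullet> x)) *\<^sub>R ((x \<bullet> x) *\<^sub>R y) = (1 / (x \<bullet> x)) *\<^sub>R ((x \<bullet> y) *\<^sub>R x)"
    by simp
  then show ?thesis using \<open>x \<noteq> 0\<close> by simp
qed

lemma int_abs_eq_1_if_product_lt_4:
  fixes m n :: int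
  assumes "0 < m * n" "m * n < 4" "\<bar>n\<bar> \<le> \<bar>m\<bar>"
  shows "\<bar>n\<bar> = 1"
proof -
  have "\<bar>n\<bar> * \<bar>n\<bar> \<le> \<bar>m\<bar> * \<bar>n\<bar>" using assms(3) by (rule mult_right_mono) simp
  also have "\<dots> < 4" using assms by (simp add: abs_mult[symmetric])
  finally have "\<bar>n\<bar> < 2"
    using mult_mono[of 2 "\<bar>n\<bar>" 2 "\<bar>n\<bar>"] by (cases "\<bar>n\<bar> < 2") auto
  moreover have "n \<noteq> 0" using assms(1) by auto
  ultimately show ?thesis by linarith
qed

lemma weyl_group_comp: "v \<in> weyl_group \<Phi> \<Longrightarrow> w \<in> weyl_group \<Phi> \<Longrightarrow> v \<circ> w \<in> weyl_group \<Phi>"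
  by (induction rule: weyl_group.induct) (auto simp: comp_assoc intro: weyl_group.intros)

lemma root_refl_weyl_group: "a \<in> \<Phi> \<Longrightarrow> root_refl a \<in> weyl_group \<Phi>"
  using weyl_group.wg_step[OF _ weyl_group.wg_id] by fastforce

lemma weyl_group_inverse:
  assumes "w \<in> weyl_group \<Phi>" and "0 \<notin> \<Phi>"
  shows "\<exists>v\<in>weyl_group \<Phi>. v \<circ> w = id \<and> w \<circ> v = id"
  using assms(1)
proof (induction rule: weyl_group.induct)
  case wg_id
  show ?case by (intro bexI[of _ id] conjI weyl_group.wg_id) simp_all
next
  case (wg_step a w)
  then obtain v where v: "v \<in> weyl_group \<Phi>" "v \<circ> w = id" "w \<circ> v = id" by blast
  have "a \<noteq> 0" using wg_step.hyps assms(2) by auto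
  then have "(v \<circ> root_refl a) \<circ> (root_refl a \<circ> w) = id \<and> (root_refl a \<circ> w) \<circ> (v \<circ> root_refl a) = id"
    using v by (simp add: comp_assoc root_refl_comp_self) (simp add: comp_assoc[symmetric] root_refl_comp_self)
  then show ?case using weyl_group_comp[OF v(1) root_refl_weyl_group[OF wg_step.hyps(1)]] by blast
qed

section \<open>Bases and positive roots\<close>

locale based_root_system =
  fixes \<Phi> \<Delta> :: "'a::euclidean_space set"
  assumes root_system: "root_system \<Phi>" and reduced: "reduced_rs \<Phi>" and base: "is_base \<Phi> \<Delta>"
begin

abbreviation Pos :: "'a set" where "Pos \<equiv> pos_roots \<Phi> \<Delta>"
abbreviation coeff :: "'a \<Rightarrow> 'a \<Rightarrow> real" where "coeff \<equiv> base_coeff \<Delta>"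
abbreviation W :: "('a \<Rightarrow> 'a) set" where "W \<equiv> weyl_group \<Phi>"

lemma finite_roots: "finite \<Phi>"
  using root_system by (simp add: root_system_def)

lemma zero_not_root: "0 \<notin> \<Phi>"
  using root_system by (simp add: root_system_def)

lemma span_roots: "span \<Phi> = UNIV"
  using root_system by (simp add: root_system_def)

lemma root_refl_root: "a \<in> \<Phi> \<Longrightarrow> b \<in> \<Phi> \<Longrightarrow> root_refl a b \<in> \<Phi>"
  using root_system unfolding root_system_def by blast

lemma cartan_integer: "a \<in> \<Phi> \<Longrightarrow> b \<in> \<Phi> \<Longrightarrow> 2 * (b \<bullet> a) / (a \<bullet> a) \<in> \<int>"
  using root_system unfolding root_system_def by blast

lemma root_nonzero: "b \<in> \<Phi> \<Longrightarrow> b \<noteq> 0"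
  using zero_not_root by auto

lemma uminus_root: "b \<in> \<Phi> \<Longrightarrow> - b \<in> \<Phi>"
  using root_refl_root[of b b] root_refl_self[of b] root_nonzero by force

lemma root_multiple: "a \<in> \<Phi> \<Longrightarrow> c *\<^sub>R a \<in> \<Phi> \<Longrightarrow> c = 1 \<or> c = -1"
  using reduced by (auto simp: reduced_rs_def)

lemma simple_root: "d \<in> \<Delta> \<Longrightarrow> d \<in> \<Phi>"
  using base by (auto simp: is_base_def)

lemma finite_simple: "finite \<Delta>"
  using base finite_roots finite_subset by (auto simp: is_base_def)

lemma simple_nonzero: "d \<in> \<Delta> \<Longrightarrow> d \<noteq> 0"
  using simple_root root_nonzero by blast

lemma nonneg_comb_in_span: "nonneg_comb \<Delta> v \<Longrightarrow> v \<in> span \<Delta>"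
  by (auto simp: nonneg_comb_def intro: span_sum span_scale span_base)

lemma span_simple: "span \<Delta> = UNIV"
proof -
  have "\<Phi> \<subseteq> span \<Delta>"
    using base nonneg_comb_in_span span_neg by (fastforce simp: is_base_def)
  then show ?thesis using span_roots span_minimal by blast
qed

lemma simple_coordinates_unique:
  "\<exists>!c. (\<forall>d. d \<notin> \<Delta> \<longrightarrow> c d = 0) \<and> v = (\<Sum>d\<in>\<Delta>. c d *\<^sub>R d)"
proof (rule ex_ex1I)
  obtain u where "v = (\<Sum>d\<in>\<Delta>. u d *\<^sub>R d)"
    using span_simple span_finite[OF finite_simple] by blast
  then show "\<exists>c. (\<forall>d. d \<notin> \<Delta> \<longrightarrow> c d = 0) \<and> v = (\<Sum>d\<in>\<Delta>. c d *\<^sub>R d)"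
    by (intro exI[of _ "\<lambda>d. if d \<in> \<Delta> then u d else 0"]) simp
next
  fix c e
  assume c: "(\<forall>d. d \<notin> \<Delta> \<longrightarrow> c d = 0) \<and> v = (\<Sum>d\<in>\<Delta>. c d *\<^sub>R d)"
    and e: "(\<forall>d. d \<notin> \<Delta> \<longrightarrow> e d = 0) \<and> v = (\<Sum>d\<in>\<Delta>. e d *\<^sub>R d)"
  then have "(\<Sum>d\<in>\<Delta>. (c d - e d) *\<^sub>R d) = 0"
    by (simp add: scaleR_diff_left sum_subtractf)
  then have "\<forall>d\<in>\<Delta>. c d = e d"
    using base unfolding is_base_def independent_explicit by (metis eq_iff_diff_eq_0 finite_simple)
  then show "c = e" using c e by (metis ext)
qed

lemma base_coeff_outside: "d \<notin> \<Delta> \<Longrightarrow> coeff v d = 0"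
  using theI'[OF simple_coordinates_unique] unfolding base_coeff_def by blast

lemma base_coeff_sum: "v = (\<Sum>d\<in>\<Delta>. coeff v d *\<^sub>R d)"
  using theI'[OF simple_coordinates_unique] unfolding base_coeff_def by blast

lemma base_coeff_eqI:
  assumes "\<And>d. d \<notin> \<Delta> \<Longrightarrow> c d = 0" and "v = (\<Sum>d\<in>\<Delta>. c d *\<^sub>R d)"
  shows "coeff v = c"
  using the1_equality[OF simple_coordinates_unique] assms unfolding base_coeff_def by blast

lemma linear_base_coeff: "linear (\<lambda>v. coeff v d)"
proof (rule linearI)
  fix x y :: 'a and r :: real
  have "coeff (x + y) = (\<lambda>d. coeff x d + coeff y d)"
    by (rule base_coeff_eqI) (simp_all add: base_coeff_outside scaleR_add_left sum.distrib
        flip: base_coeff_sum)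
  then show "coeff (x + y) d = coeff x d + coeff y d" by simp
  have "r *\<^sub>R x = (\<Sum>d\<in>\<Delta>. (r * coeff x d) *\<^sub>R d)"
    by (subst (1) base_coeff_sum[of x]) (simp add: scaleR_sum_right)
  then have "coeff (r *\<^sub>R x) = (\<lambda>d. r * coeff x d)"
    by (intro base_coeff_eqI) (simp_all add: base_coeff_outside)
  then show "coeff (r *\<^sub>R x) d = r *\<^sub>R coeff x d" by simp
qed

lemma base_coeff_add: "coeff (x + y) d = coeff x d + coeff y d"
  by (rule linear_add[OF linear_base_coeff])

lemma base_coeff_scaleR: "coeff (r *\<^sub>R x) d = r * coeff x d"
  using linear_scale[OF linear_base_coeff] by simp

lemma base_coeff_uminus: "coeff (- x) d = - coeff x d"
  by (rule linear_neg[OF linear_base_coeff])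

lemma base_coeff_diff: "coeff (x - y) d = coeff x d - coeff y d"
  by (rule linear_diff[OF linear_base_coeff])

lemma base_coeff_sum_image: "coeff (\<Sum>i\<in>A. f i) d = (\<Sum>i\<in>A. coeff (f i) d)"
  by (rule linear_sum[OF linear_base_coeff])

lemma base_coeff_simple: "e \<in> \<Delta> \<Longrightarrow> coeff e d = (if d = e then 1 else 0)"
  by (subst base_coeff_eqI[of "\<lambda>d. if d = e then 1 else 0"])
     (auto simp: if_distrib[of "\<lambda>c. c *\<^sub>R _"] sum.delta' finite_simple cong: if_cong)

lemma inner_base_coeff: "x \<bullet> v = (\<Sum>d\<in>\<Delta>. coeff v d * (x \<bullet> d))"
  by (subst base_coeff_sum[of v]) (simp add: inner_sum_right)

lemma base_coeff_nonneg_comb: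
  assumes "nonneg_comb \<Delta> v"
  shows "0 \<le> coeff v d"
proof -
  obtain c :: "'a \<Rightarrow> nat" where c: "v = (\<Sum>d\<in>\<Delta>. real (c d) *\<^sub>R d)"
    using assms by (auto simp: nonneg_comb_def)
  have "coeff v = (\<lambda>d. if d \<in> \<Delta> then real (c d) else 0)"
    by (rule base_coeff_eqI) (simp_all add: c cong: sum.cong)
  then show ?thesis by simp
qed

lemma pos_root_root: "b \<in> Pos \<Longrightarrow> b \<in> \<Phi>"
  by (simp add: pos_roots_def)

lemma pos_root_coeff_nonneg: "b \<in> Pos \<Longrightarrow> 0 \<le> coeff b d"
  by (auto simp: pos_roots_def base_coeff_nonneg_comb)

lemma root_pos_or_uminus_pos: "b \<in> \<Phi> \<Longrightarrow> b \<in> Pos \<or> - b \<in> Pos"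
  using base uminus_root by (auto simp: is_base_def pos_roots_def)

lemma pos_root_pos_coeff:
  assumes "b \<in> Pos"
  shows "\<exists>d\<in>\<Delta>. 0 < coeff b d"
proof (rule ccontr)
  assume "\<not> ?thesis"
  then have "\<forall>d\<in>\<Delta>. coeff b d = 0"
    using pos_root_coeff_nonneg[OF assms] by (meson not_le order_antisym)
  then have "b = 0" using base_coeff_sum[of b] by simp
  then show False using assms pos_root_root root_nonzero by blast
qed

lemma uminus_pos_root:
  assumes "b \<in> Pos"
  shows "- b \<notin> Pos"
proof
  assume "- b \<in> Pos"
  then have "\<forall>d\<in>\<Delta>. coeff b d \<le> 0"
    using pos_root_coeff_nonneg[of "- b"] by (simp add: base_coeff_uminus)
  then show False using pos_root_pos_coeff[OF assms] by force
qed

lemma uminus_not_pos_root: "b \<in> \<Phi> \<Longrightarrow> b \<notin> Pos \<Longrightarrow> - b \<in> Pos"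
  using root_pos_or_uminus_pos by blast

lemma pos_rootI:
  assumes "b \<in> \<Phi>" and "\<forall>d\<in>\<Delta>. 0 \<le> coeff b d"
  shows "b \<in> Pos"
proof (rule ccontr)
  assume "b \<notin> Pos"
  then have "\<forall>d\<in>\<Delta>. 0 \<le> coeff (- b) d"
    using uminus_not_pos_root[OF assms(1)] pos_root_coeff_nonneg by blast
  then have "\<forall>d\<in>\<Delta>. coeff b d = 0" using assms(2) base_coeff_uminus by force
  then show False using base_coeff_sum[of b] assms(1) root_nonzero by simp
qed

lemma pos_root_if_pos_coeff: "b \<in> \<Phi> \<Longrightarrow> d \<in> \<Delta> \<Longrightarrow> 0 < coeff b d \<Longrightarrow> b \<in> Pos"
  using uminus_not_pos_root[of b] pos_root_coeff_nonneg[of "- b" d] base_coeff_uminus[of b d]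
  by force

lemma simple_pos_root: "d \<in> \<Delta> \<Longrightarrow> d \<in> Pos"
  using pos_root_if_pos_coeff[of d d] base_coeff_simple simple_root by simp

lemma base_coeff_root_refl_simple:
  "e \<in> \<Delta> \<Longrightarrow> coeff (root_refl e b) d = coeff b d - (if d = e then 2 * (b \<bullet> e) / (e \<bullet> e) else 0)"
  by (simp add: root_refl_def base_coeff_diff base_coeff_scaleR base_coeff_simple)

text \<open>Reducedness: the only positive multiple of \<open>d\<close> that is a root is \<open>d\<close> itself.\<close>
lemma pos_root_coeff_other_simple:
  assumes "b \<in> Pos" "d \<in> \<Delta>" "b \<noteq> d"
  shows "\<exists>e\<in>\<Delta>. e \<noteq> d \<and> 0 < coeff b e"
proof (rule ccontr)
  assume "\<not> ?thesis"
  then have zero: "\<forall>e\<in>\<Delta>. e \<noteq> d \<longrightarrow> coeff b e = 0"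
    using pos_root_coeff_nonneg[OF assms(1)] by (meson not_le order_antisym)
  have "b = (\<Sum>e\<in>\<Delta>. coeff b e *\<^sub>R e)" by (rule base_coeff_sum)
  also have "\<dots> = coeff b d *\<^sub>R d"
    using assms(2) zero by (subst sum.remove[OF finite_simple]) (auto intro: sum.neutral)
  finally have b: "b = coeff b d *\<^sub>R d" .
  then have "coeff b d = 1 \<or> coeff b d = -1"
    using root_multiple assms pos_root_root simple_root by metis
  then have "coeff b d = 1" using pos_root_coeff_nonneg[OF assms(1), of d] by auto
  then show False using b assms(3) by simp
qed

lemma root_refl_simple_pos_root:
  assumes "d \<in> \<Delta>" "b \<in> Pos" "b \<noteq> d"
  shows "root_refl d b \<in> Pos"
proof -
  obtain e where "e \<in> \<Delta>" "e \<noteq> d" "0 < coeff b e"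
    using pos_root_coeff_other_simple assms by blast
  then show ?thesis
    using pos_root_if_pos_coeff base_coeff_root_refl_simple[OF assms(1)] root_refl_root simple_root
      pos_root_root assms by fastforce
qed

lemma root_refl_simple_pos_root_iff:
  assumes d: "d \<in> \<Delta>" and x: "x \<in> \<Phi>"
  shows "root_refl d x \<in> Pos \<longleftrightarrow> (x \<in> Pos \<and> x \<noteq> d) \<or> x = - d"
proof -
  have "d \<noteq> 0" "d \<in> Pos" "- d \<notin> Pos"
    using d simple_nonzero simple_pos_root uminus_pos_root by auto
  consider "x = d" | "x = - d" | "x \<in> Pos" "x \<noteq> d" | "x \<notin> Pos" "x \<noteq> - d"
    by blast
  then show ?thesis
  proof cases
    case 4
    then have "root_refl d (- x) \<in> Pos"
      using root_refl_simple_pos_root[OF d] uminus_not_pos_root[OF x] by fastforce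
    then show ?thesis using 4 uminus_pos_root by (fastforce simp: root_refl_uminus)
  qed (use \<open>d \<noteq> 0\<close> \<open>d \<in> Pos\<close> \<open>- d \<notin> Pos\<close> root_refl_simple_pos_root[OF d] in
        \<open>auto simp: root_refl_self root_refl_uminus\<close>)
qed

lemma root_refl_pos_root_simple:
  assumes b: "b \<in> Pos" and d: "d \<in> \<Delta>" and obtuse: "d \<bullet> b < 0"
  shows "root_refl b d \<in> Pos" and "root_refl b d \<noteq> d"
proof -
  let ?t = "- (2 * (d \<bullet> b) / (b \<bullet> b))"
  have "b \<noteq> 0" using root_nonzero pos_root_root b by blast
  then have "0 < ?t" using obtuse by (simp add: divide_neg_pos)
  have c_eq: "root_refl b d = d + ?t *\<^sub>R b" by (simp add: root_refl_def)
  show "root_refl b d \<noteq> d" using c_eq \<open>0 < ?t\<close> \<open>b \<noteq> 0\<close> obtuse by simp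
  show "root_refl b d \<in> Pos"
  proof (rule pos_rootI)
    show "root_refl b d \<in> \<Phi>" using root_refl_root pos_root_root[OF b] simple_root[OF d] by blast
    show "\<forall>e\<in>\<Delta>. 0 \<le> coeff (root_refl b d) e"
    proof
      fix e
      have "0 \<le> coeff d e + ?t * coeff b e"
        using \<open>0 < ?t\<close> pos_root_coeff_nonneg[OF b] pos_root_coeff_nonneg[OF simple_pos_root[OF d]]
        by (intro add_nonneg_nonneg mult_nonneg_nonneg) auto
      then show "0 \<le> coeff (root_refl b d) e" unfolding c_eq base_coeff_add base_coeff_scaleR .
    qed
  qed
qed

lemma orthogonal_transformation_weyl: "w \<in> W \<Longrightarrow> orthogonal_transformation w"
proof (induction rule: weyl_group.induct)
  case (wg_step a w)
  then show ?case
    using orthogonal_transformation_compose orthogonal_transformation_root_refl root_nonzero by blast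
qed (simp add: id_def)

lemma weyl_root: "w \<in> W \<Longrightarrow> b \<in> \<Phi> \<Longrightarrow> w b \<in> \<Phi>"
  by (induction arbitrary: b rule: weyl_group.induct) (auto intro: root_refl_root)

lemma weyl_inner: "w \<in> W \<Longrightarrow> w x \<bullet> w y = x \<bullet> y"
  using orthogonal_transformation_weyl by (simp add: orthogonal_transformation_def)

lemma weyl_uminus: "w \<in> W \<Longrightarrow> w (- x) = - w x"
  using orthogonal_transformation_weyl orthogonal_transformation_linear linear_neg by blast

lemma weyl_inj: "w \<in> W \<Longrightarrow> inj w"
  using orthogonal_transformation_weyl orthogonal_transformation_inj by blast

lemma simple_word_weyl: "set ds \<subseteq> \<Delta> \<Longrightarrow> simple_word ds \<in> W"
  by (induction ds) (auto intro: weyl_group.intros simple_root)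

lemma weyl_inverse: "w \<in> W \<Longrightarrow> \<exists>v\<in>W. v \<circ> w = id \<and> w \<circ> v = id"
  using weyl_group_inverse zero_not_root by blast

lemma weyl_surj_root:
  assumes "w \<in> W" "b \<in> \<Phi>"
  shows "\<exists>g\<in>\<Phi>. w g = b"
proof -
  obtain v where "v \<in> W" "w \<circ> v = id" using weyl_inverse[OF assms(1)] by blast
  then show ?thesis using weyl_root assms(2) by (metis comp_apply id_apply)
qed

definition height :: "'a \<Rightarrow> real" where
  "height v = (\<Sum>d\<in>\<Delta>. coeff v d)"

lemma height_pos: "b \<in> Pos \<Longrightarrow> 0 < height b"
  unfolding height_def
  using pos_root_pos_coeff pos_root_coeff_nonneg finite_simple
  by (meson sum_pos2)

lemma height_root_refl_simple:
  assumes "e \<in> \<Delta>"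
  shows "height (root_refl e b) = height b - 2 * (b \<bullet> e) / (e \<bullet> e)"
proof -
  let ?c = "2 * (b \<bullet> e) / (e \<bullet> e)"
  have "height (root_refl e b) = (\<Sum>d\<in>\<Delta>. coeff b d - (if d = e then ?c else 0))"
    unfolding height_def base_coeff_root_refl_simple[OF assms] ..
  also have "\<dots> = height b - ?c"
    using assms by (simp add: height_def sum_subtractf sum.delta[OF finite_simple])
  finally show ?thesis .
qed

lemma pos_root_pos_inner_simple:
  assumes "b \<in> Pos"
  shows "\<exists>d\<in>\<Delta>. 0 < b \<bullet> d"
proof (rule ccontr)
  assume "\<not> ?thesis"
  then have "b \<bullet> b \<le> 0"
    unfolding inner_base_coeff[of b b]
    by (intro sum_nonpos mult_nonneg_nonpos pos_root_coeff_nonneg[OF assms]) (simp add: not_less)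
  then show False using root_nonzero[OF pos_root_root[OF assms]] inner_gt_zero_iff[of b] by linarith
qed

text \<open>The height drops by a positive Cartan integer, which allows induction on
  \<open>nat \<lceil>height b\<rceil>\<close>.\<close>
lemma pos_root_height_descent:
  assumes b: "b \<in> Pos" "b \<notin> \<Delta>"
  obtains d where "d \<in> \<Delta>" "0 < b \<bullet> d" "root_refl d b \<in> Pos"
    "nat \<lceil>height (root_refl d b)\<rceil> < nat \<lceil>height b\<rceil>"
proof -
  obtain d where d: "d \<in> \<Delta>" "0 < b \<bullet> d" using pos_root_pos_inner_simple b by blast
  have pos: "root_refl d b \<in> Pos"
    using root_refl_simple_pos_root d b by blast
  have "2 * (b \<bullet> d) / (d \<bullet> d) \<in> \<int>" "0 < 2 * (b \<bullet> d) / (d \<bullet> d)"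
    using cartan_integer simple_root pos_root_root d b simple_nonzero[OF d(1)] by auto
  then have "1 \<le> 2 * (b \<bullet> d) / (d \<bullet> d)"
    by (metis Ints_cases of_int_0_less_iff of_int_1_le_iff int_one_le_iff_zero_less)
  then have "height (root_refl d b) \<le> height b - 1" using height_root_refl_simple[OF d(1)] by simp
  then have "nat \<lceil>height (root_refl d b)\<rceil> < nat \<lceil>height b\<rceil>"
    using height_pos[OF pos] by linarith
  then show thesis using that d pos by blast
qed

lemma pos_root_simple_word_image:
  "b \<in> Pos \<Longrightarrow> \<exists>ds e. set ds \<subseteq> \<Delta> \<and> e \<in> \<Delta> \<and> b = simple_word ds e"
proof (induction "nat \<lceil>height b\<rceil>" arbitrary: b rule: less_induct)
  case less
  show ?case
  proof (cases "b \<in> \<Delta>")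
    case True
    then show ?thesis by (intro exI[of _ "[]"] exI[of _ b]) simp
  next
    case False
    then obtain d where d: "d \<in> \<Delta>" "root_refl d b \<in> Pos"
      "nat \<lceil>height (root_refl d b)\<rceil> < nat \<lceil>height b\<rceil>"
      using pos_root_height_descent less.prems by blast
    then obtain ds e where "set ds \<subseteq> \<Delta>" "e \<in> \<Delta>" "root_refl d b = simple_word ds e"
      using less.hyps by blast
    moreover have "b = root_refl d (root_refl d b)"
      using root_refl_root_refl[OF simple_nonzero[OF d(1)]] by simp
    ultimately show ?thesis using d(1) by (intro exI[of _ "d # ds"] exI[of _ e]) auto
  qed
qed

lemma root_refl_simple_word:
  assumes "a \<in> \<Phi>"
  shows "\<exists>ds. set ds \<subseteq> \<Delta> \<and> root_refl a = simple_word ds"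
proof -
  obtain b where b: "b \<in> Pos" "root_refl a = root_refl b"
    using root_pos_or_uminus_pos[OF assms] root_refl_uminus_root by (metis minus_minus)
  obtain ds e where de: "set ds \<subseteq> \<Delta>" "e \<in> \<Delta>" "b = simple_word ds e"
    using pos_root_simple_word_image b by blast
  let ?u = "simple_word ds"
  have "0 \<notin> set ds" using de(1) simple_nonzero by blast
  then have "root_refl b = root_refl (?u e) \<circ> ?u \<circ> simple_word (rev ds)"
    using de(3) simple_word_rev_inverse[of ds] by (simp add: comp_assoc)
  also have "\<dots> = ?u \<circ> root_refl e \<circ> simple_word (rev ds)"
    using orthogonal_transformation_root_refl_conj[OF
        orthogonal_transformation_weyl[OF simple_word_weyl[OF de(1)]], of e] by simp
  also have "\<dots> = simple_word (ds @ e # rev ds)" by (simp add: simple_word_append comp_assoc)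
  finally show ?thesis using b de by (intro exI[of _ "ds @ e # rev ds"]) auto
qed

lemma weyl_simple_word: "w \<in> W \<Longrightarrow> \<exists>ds. set ds \<subseteq> \<Delta> \<and> w = simple_word ds"
proof (induction rule: weyl_group.induct)
  case wg_id
  then show ?case by (intro exI[of _ "[]"]) simp
next
  case (wg_step a w)
  then obtain ds es where "set ds \<subseteq> \<Delta>" "w = simple_word ds" "set es \<subseteq> \<Delta>"
    "root_refl a = simple_word es"
    using root_refl_simple_word by blast
  then show ?case by (intro exI[of _ "es @ ds"]) (simp add: simple_word_append)
qed

lemma weyl_comp_simple: "w \<in> W \<Longrightarrow> d \<in> \<Delta> \<Longrightarrow> w \<circ> root_refl d \<in> W"
  using weyl_group_comp root_refl_weyl_group simple_root by blast

lemma simple_comp_weyl: "w \<in> W \<Longrightarrow> d \<in> \<Delta> \<Longrightarrow> root_refl d \<circ> w \<in> W"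
  using weyl_group.wg_step simple_root by blast

section \<open>Inversions and length\<close>

definition inversions :: "('a \<Rightarrow> 'a) \<Rightarrow> 'a set" where
  "inversions w = {b \<in> Pos. w b \<notin> Pos}"

definition num_inversions :: "('a \<Rightarrow> 'a) \<Rightarrow> nat" where
  "num_inversions w = card (inversions w)"

lemma finite_inversions: "finite (inversions w)"
  using finite_roots by (simp add: inversions_def pos_roots_def)

lemma num_inversions_id [simp]: "num_inversions id = 0"
  by (simp add: num_inversions_def inversions_def)

lemma inversions_simple_comp:
  assumes w: "w \<in> W" and d: "d \<in> \<Delta>" and g: "g \<in> Pos" "w g = d"
  shows "inversions (root_refl d \<circ> w) = insert g (inversions w)"
proof -
  have "root_refl d (w b) \<notin> Pos \<longleftrightarrow> w b \<notin> Pos \<or> b = g" if b: "b \<in> Pos" for b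
  proof -
    have "w b = d \<longleftrightarrow> b = g" using weyl_inj[OF w] g by (metis injD)
    moreover have "w b \<noteq> - d"
    proof
      assume "w b = - d"
      then have "w b = w (- g)" using weyl_uminus[OF w] g by simp
      then have "b = - g" using weyl_inj[OF w] by (metis injD)
      then show False using uminus_pos_root g b by blast
    qed
    ultimately show ?thesis
      using root_refl_simple_pos_root_iff[OF d weyl_root[OF w pos_root_root[OF b]]] by auto
  qed
  then show ?thesis using g by (auto simp: inversions_def)
qed

lemma num_inversions_simple_comp:
  assumes "w \<in> W" "d \<in> \<Delta>" "g \<in> Pos" "w g = d"
  shows "num_inversions (root_refl d \<circ> w) = num_inversions w + 1"
proof -
  have "g \<notin> inversions w" using assms simple_pos_root by (simp add: inversions_def)
  then show ?thesis
    using inversions_simple_comp[OF assms] finite_inversions by (simp add: num_inversions_def)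
qed

lemma num_inversions_simple_comp_neg:
  assumes w: "w \<in> W" and d: "d \<in> \<Delta>" and g: "g \<in> \<Phi>" "w g = d" "g \<notin> Pos"
  shows "num_inversions (root_refl d \<circ> w) + 1 = num_inversions w"
proof -
  have "(root_refl d \<circ> w) (- g) = d"
    using g weyl_uminus[OF w] simple_nonzero[OF d] by (simp add: root_refl_uminus root_refl_self)
  then have "num_inversions (root_refl d \<circ> (root_refl d \<circ> w)) = num_inversions (root_refl d \<circ> w) + 1"
    using num_inversions_simple_comp simple_comp_weyl w d uminus_not_pos_root g by blast
  then show ?thesis by (simp add: comp_assoc[symmetric] root_refl_comp_self simple_nonzero[OF d])
qed

lemma inversions_comp_simple:
  assumes w: "w \<in> W" and d: "d \<in> \<Delta>" and wd: "w d \<in> Pos"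
  shows "inversions (w \<circ> root_refl d) = root_refl d ` insert (- d) (inversions w)"
proof -
  have "d \<noteq> 0" using d simple_nonzero by blast
  have "root_refl d b \<in> insert (- d) (inversions w) \<longleftrightarrow> b \<in> inversions (w \<circ> root_refl d)" for b
  proof (cases "root_refl d b \<in> \<Phi>")
    case True
    have "w (- d) \<notin> Pos" using weyl_uminus[OF w] uminus_pos_root wd by simp
    then show ?thesis
      using root_refl_simple_pos_root_iff[OF d True] wd
      by (auto simp: inversions_def root_refl_root_refl[OF \<open>d \<noteq> 0\<close>])
  next
    case False
    then have "b \<notin> \<Phi>"
      using root_refl_root[OF simple_root[OF d]] by blast
    then show ?thesis
      using False uminus_root[OF simple_root[OF d]] by (auto simp: inversions_def pos_roots_def)
  qed
  then show ?thesis using root_refl_image_iff[OF \<open>d \<noteq> 0\<close>] by blast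
qed

lemma num_inversions_comp_simple:
  assumes w: "w \<in> W" and d: "d \<in> \<Delta>" and wd: "w d \<in> Pos"
  shows "num_inversions (w \<circ> root_refl d) = num_inversions w + 1"
proof -
  have inj: "inj (root_refl d)"
    using orthogonal_transformation_inj orthogonal_transformation_root_refl simple_nonzero d by blast
  have "num_inversions (w \<circ> root_refl d) = card (insert (- d) (inversions w))"
    unfolding num_inversions_def inversions_comp_simple[OF assms]
    by (rule card_image[OF inj_on_subset[OF inj subset_UNIV]])
  moreover have "- d \<notin> inversions w"
    using uminus_pos_root[OF simple_pos_root[OF d]] by (simp add: inversions_def)
  ultimately show ?thesis using finite_inversions by (simp add: num_inversions_def)
qed

lemma num_inversions_comp_simple_neg:
  assumes w: "w \<in> W" and d: "d \<in> \<Delta>" and wd: "w d \<notin> Pos"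
  shows "num_inversions (w \<circ> root_refl d) + 1 = num_inversions w"
proof -
  have "(w \<circ> root_refl d) d \<in> Pos"
    using wd weyl_uminus[OF w] root_refl_self[OF simple_nonzero[OF d]]
      uminus_not_pos_root weyl_root[OF w simple_root[OF d]] by simp
  then show ?thesis
    using num_inversions_comp_simple[OF weyl_comp_simple[OF w d] d]
    by (simp add: comp_assoc root_refl_comp_self simple_nonzero[OF d])
qed

lemma linear_image_pos_root:
  assumes "linear w" "b \<in> Pos" "w b \<in> \<Phi>" "\<forall>d\<in>\<Delta>. coeff b d \<noteq> 0 \<longrightarrow> w d \<in> Pos"
  shows "w b \<in> Pos"
proof (rule pos_rootI[OF assms(3)], intro ballI)
  fix e assume "e \<in> \<Delta>"
  have "w b = (\<Sum>d\<in>\<Delta>. coeff b d *\<^sub>R w d)"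
    by (subst base_coeff_sum[of b]) (simp add: linear_sum[OF assms(1)] linear_scale[OF assms(1)])
  then have "coeff (w b) e = (\<Sum>d\<in>\<Delta>. coeff b d * coeff (w d) e)"
    by (simp add: base_coeff_sum_image base_coeff_scaleR)
  also have "\<dots> \<ge> 0"
    using assms(2,4) pos_root_coeff_nonneg by (intro sum_nonneg) (metis mult_eq_0_iff mult_nonneg_nonneg order_refl)
  finally show "0 \<le> coeff (w b) e" .
qed

lemma simple_word_deletion:
  assumes "set ds \<subseteq> \<Delta>" "d \<in> \<Delta>" "simple_word ds d \<notin> Pos"
  shows "\<exists>es. set es \<subseteq> \<Delta> \<and> length es < length ds \<and> simple_word ds \<circ> root_refl d = simple_word es"
  using assms
proof (induction ds)
  case (Cons e ds)
  let ?u = "simple_word ds"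
  have e: "e \<in> \<Delta>" and ds: "set ds \<subseteq> \<Delta>" using Cons.prems by auto
  show ?case
  proof (cases "?u d \<in> Pos")
    case False
    then obtain es where es: "set es \<subseteq> \<Delta>" "length es < length ds" "?u \<circ> root_refl d = simple_word es"
      using Cons.IH ds Cons.prems(2) by blast
    then have "simple_word (e # ds) \<circ> root_refl d = simple_word (e # es)"
      by (simp only: simple_word_Cons comp_assoc)
    moreover have "set (e # es) \<subseteq> \<Delta>" "length (e # es) < length (e # ds)" using e es by auto
    ultimately show ?thesis by blast
  next
    case True
    then have "?u d = e"
      using Cons.prems(3) root_refl_simple_pos_root_iff[OF e pos_root_root[OF True]] by auto
    then have "?u \<circ> root_refl d = root_refl e \<circ> ?u"
      using orthogonal_transformation_root_refl_conj[OF
          orthogonal_transformation_weyl[OF simple_word_weyl[OF ds]]] by metis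
    then have "simple_word (e # ds) \<circ> root_refl d = ?u"
      using root_refl_comp_self[OF simple_nonzero[OF e]] by (metis comp_assoc id_comp simple_word_Cons)
    moreover have "length ds < length (e # ds)" by simp
    ultimately show ?thesis using ds by blast
  qed
qed (simp add: simple_pos_root)

lemma weyl_eq_id_if_simple_pos:
  assumes w: "w \<in> W" and pos: "\<forall>d\<in>\<Delta>. w d \<in> Pos"
  shows "w = id"
proof -
  obtain ds where ds: "set ds \<subseteq> \<Delta>" "w = simple_word ds"
    and min: "\<And>es. set es \<subseteq> \<Delta> \<Longrightarrow> w = simple_word es \<Longrightarrow> length ds \<le> length es"
    using ex_has_least_nat[of "\<lambda>ds. set ds \<subseteq> \<Delta> \<and> w = simple_word ds" _ length]
      weyl_simple_word[OF w] by metis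
  show ?thesis
  proof (cases ds rule: rev_cases)
    case (snoc es d)
    have d: "d \<in> \<Delta>" and es: "set es \<subseteq> \<Delta>" using ds snoc by auto
    have w_eq: "w = simple_word es \<circ> root_refl d" using ds snoc by (simp add: simple_word_append)
    then have "simple_word es d = - w d"
      using root_refl_self[OF simple_nonzero[OF d]] root_refl_root_refl[OF simple_nonzero[OF d]]
        weyl_uminus[OF w] by (metis comp_apply)
    then have "simple_word es d \<notin> Pos" using uminus_pos_root pos d by simp
    then obtain fs where "set fs \<subseteq> \<Delta>" "length fs < length es" "w = simple_word fs"
      using simple_word_deletion[OF es d] w_eq by metis
    then show ?thesis using min snoc by fastforce
  qed (use ds in simp)
qed

lemma num_inversions_simple_word_le: "set ds \<subseteq> \<Delta> \<Longrightarrow> num_inversions (simple_word ds) \<le> length ds"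
proof (induction ds)
  case (Cons d ds)
  let ?u = "simple_word ds" and ?g = "simple_word (rev ds) d"
  have d: "d \<in> \<Delta>" and ds: "set ds \<subseteq> \<Delta>" using Cons.prems by auto
  have g: "?g \<in> \<Phi>" using simple_word_weyl[of "rev ds"] ds weyl_root simple_root d by auto
  have "?u ?g = d"
    using simple_word_rev_inverse[of ds] ds simple_nonzero by (metis comp_apply id_apply subsetD)
  then have "num_inversions (root_refl d \<circ> ?u) \<le> num_inversions ?u + 1"
    using num_inversions_simple_comp num_inversions_simple_comp_neg simple_word_weyl[OF ds] d g
    by (cases "?g \<in> Pos") fastforce+
  then show ?case using Cons.IH ds unfolding simple_word_Cons length_Cons by linarith
qed simp

lemma simple_word_of_num_inversions:
  "w \<in> W \<Longrightarrow> \<exists>ds. set ds \<subseteq> \<Delta> \<and> length ds = num_inversions w \<and> simple_word ds = w"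
proof (induction "num_inversions w" arbitrary: w rule: less_induct)
  case less
  show ?case
  proof (cases "\<forall>d\<in>\<Delta>. w d \<in> Pos")
    case True
    then show ?thesis
      using weyl_eq_id_if_simple_pos[OF less.prems True] by (intro exI[of _ "[]"]) simp
  next
    case False
    then obtain d where d: "d \<in> \<Delta>" "w d \<notin> Pos" by blast
    let ?w = "w \<circ> root_refl d"
    have "num_inversions ?w + 1 = num_inversions w"
      using num_inversions_comp_simple_neg less.prems d by blast
    then obtain es where es: "set es \<subseteq> \<Delta>" "length es + 1 = num_inversions w" "simple_word es = ?w"
      using less.hyps[of ?w] weyl_comp_simple less.prems d by fastforce
    have "simple_word (es @ [d]) = w"
      using es(3) root_refl_comp_self[OF simple_nonzero[OF d(1)]]
      by (simp add: simple_word_append comp_assoc)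
    then show ?thesis using es d by (intro exI[of _ "es @ [d]"]) auto
  qed
qed

theorem weyl_length_eq_num_inversions:
  assumes "w \<in> W"
  shows "weyl_length \<Delta> w = num_inversions w"
  unfolding weyl_length_def
proof (rule Least_equality)
  show "\<exists>ds. length ds = num_inversions w \<and> set ds \<subseteq> \<Delta> \<and> simple_word ds = w"
    using simple_word_of_num_inversions[OF assms] by blast
qed (use num_inversions_simple_word_le in blast)

lemma num_inversions_conj_simple:
  assumes w: "w \<in> W" "w \<circ> w = id" and d: "d \<in> \<Delta>" and wd: "w d \<in> Pos" "w d \<noteq> d"
  shows "num_inversions (root_refl d \<circ> w \<circ> root_refl d) = num_inversions w + 2"
proof -
  let ?g = "root_refl d (w d)"
  have "?g \<in> Pos" using root_refl_simple_pos_root[OF d wd] .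
  moreover have "(w \<circ> root_refl d) ?g = d"
    using w(2) root_refl_root_refl[OF simple_nonzero[OF d]] by (simp add: pointfree_idE)
  ultimately have "num_inversions (root_refl d \<circ> (w \<circ> root_refl d)) = num_inversions (w \<circ> root_refl d) + 1"
    using num_inversions_simple_comp weyl_comp_simple[OF w(1) d] d by blast
  then show ?thesis using num_inversions_comp_simple[OF w(1) d wd(1)] by (simp add: comp_assoc)
qed

section \<open>Root lengths and the dual height\<close>

lemma roots_Cauchy_Schwarz_strict:
  assumes x: "x \<in> \<Phi>" and y: "y \<in> \<Phi>" and "y \<noteq> x" "y \<noteq> - x"
  shows "(x \<bullet> y)\<^sup>2 < (x \<bullet> x) * (y \<bullet> y)"
proof -
  have "(x \<bullet> y)\<^sup>2 \<noteq> (x \<bullet> x) * (y \<bullet> y)"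
  proof
    assume "(x \<bullet> y)\<^sup>2 = (x \<bullet> x) * (y \<bullet> y)"
    then have "y = ((x \<bullet> y) / (x \<bullet> x)) *\<^sub>R x"
      using collinear_if_Cauchy_Schwarz_eq root_nonzero[OF x] by blast
    then show False
      using root_multiple[OF x] y \<open>y \<noteq> x\<close> \<open>y \<noteq> - x\<close> by (metis scaleR_minus1_left scaleR_one)
  qed
  then show ?thesis using Cauchy_Schwarz_ineq[of x y] by linarith
qed

text \<open>For non-proportional roots the product of the two Cartan integers is
  \<open>4 cos\<^sup>2 \<theta> \<in> {1, 2, 3}\<close>, and the one taken over the longer root has the smaller absolute
  value, hence is \<open>\<plusminus>1\<close>.\<close>
lemma nonorthogonal_roots_cartan:
  assumes x: "x \<in> \<Phi>" and y: "y \<in> \<Phi>" and nonorth: "x \<bullet> y \<noteq> 0"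
    and le: "y \<bullet> y \<le> x \<bullet> x" and "y \<noteq> x" "y \<noteq> - x"
  shows "2 * \<bar>x \<bullet> y\<bar> = x \<bullet> x \<and> (x \<bullet> x) / (y \<bullet> y) \<in> {1, 2, 3}"
proof -
  have xx: "0 < x \<bullet> x" and yy: "0 < y \<bullet> y" using x y root_nonzero by auto
  have cs: "(x \<bullet> y)\<^sup>2 < (x \<bullet> x) * (y \<bullet> y)"
    using roots_Cauchy_Schwarz_strict assms by blast
  obtain m :: int where m: "2 * (x \<bullet> y) / (y \<bullet> y) = m"
    using cartan_integer[OF y x] by (auto elim: Ints_cases)
  obtain n :: int where n: "2 * (x \<bullet> y) / (x \<bullet> x) = n"
    using cartan_integer[OF x y] by (auto elim: Ints_cases simp: inner_commute)
  have mn: "real_of_int (m * n) = 4 * (x \<bullet> y)\<^sup>2 / ((x \<bullet> x) * (y \<bullet> y))"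
    using m n xx yy by (simp flip: m n add: field_simps power2_eq_square)
  have "4 * (x \<bullet> y)\<^sup>2 / ((x \<bullet> x) * (y \<bullet> y)) < 4"
    using cs xx yy by (simp add: field_simps)
  moreover have "0 < 4 * (x \<bullet> y)\<^sup>2 / ((x \<bullet> x) * (y \<bullet> y))"
    using nonorth xx yy by simp
  ultimately have "0 < m * n" "m * n < 4"
    unfolding mn[symmetric] by (simp_all del: of_int_mult add: of_int_mult[symmetric])
  moreover have "\<bar>n\<bar> \<le> \<bar>m\<bar>"
  proof -
    have "2 * \<bar>x \<bullet> y\<bar> / (x \<bullet> x) \<le> 2 * \<bar>x \<bullet> y\<bar> / (y \<bullet> y)"
      using le xx yy by (intro divide_left_mono) auto
    then have "\<bar>real_of_int n\<bar> \<le> \<bar>real_of_int m\<bar>"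
      unfolding m[symmetric] n[symmetric] using xx yy by (simp add: abs_divide abs_mult)
    then show ?thesis by (metis of_int_abs of_int_le_iff)
  qed
  ultimately have "\<bar>n\<bar> = 1" by (rule int_abs_eq_1_if_product_lt_4)
  then have n1: "n = 1 \<or> n = -1" by linarith
  then consider "2 * (x \<bullet> y) = x \<bullet> x" | "2 * (x \<bullet> y) = - (x \<bullet> x)"
    using n xx by (auto simp: field_simps)
  then have "2 * \<bar>x \<bullet> y\<bar> = x \<bullet> x" using xx by cases (auto simp: abs_if simp del: inner_gt_zero_iff)
  moreover have "real_of_int m = (x \<bullet> x) / (y \<bullet> y) * real_of_int n"
    unfolding m[symmetric] n[symmetric] using xx yy by (simp add: field_simps)
  then have "(x \<bullet> x) / (y \<bullet> y) = real_of_int (m * n)" using n1 by auto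
  moreover have "m * n \<in> {1, 2, 3}" using \<open>0 < m * n\<close> \<open>m * n < 4\<close> by auto
  ultimately show ?thesis by (auto simp del: of_int_mult)
qed

lemma roots_nonempty: "\<Phi> \<noteq> {}"
proof
  assume "\<Phi> = {}"
  then have "(UNIV :: 'a set) = {0}" using span_roots by simp
  then show False using nonzero_Basis nonempty_Basis by (metis UNIV_I all_not_in_conv singletonD)
qed

lemma max_sq_ge: "b \<in> \<Phi> \<Longrightarrow> b \<bullet> b \<le> max_sq \<Phi>"
  unfolding max_sq_def using finite_roots by simp

lemma min_sq_le: "b \<in> \<Phi> \<Longrightarrow> min_sq \<Phi> \<le> b \<bullet> b"
  unfolding min_sq_def using finite_roots by simp

lemma max_sq_root: "\<exists>b\<in>\<Phi>. b \<bullet> b = max_sq \<Phi>"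
proof -
  have "max_sq \<Phi> \<in> (\<lambda>b. b \<bullet> b) ` \<Phi>"
    unfolding max_sq_def using finite_roots roots_nonempty by (intro Max_in) auto
  then show ?thesis by auto
qed

lemma min_sq_root: "\<exists>b\<in>\<Phi>. b \<bullet> b = min_sq \<Phi>"
proof -
  have "min_sq \<Phi> \<in> (\<lambda>b. b \<bullet> b) ` \<Phi>"
    unfolding min_sq_def using finite_roots roots_nonempty by (intro Min_in) auto
  then show ?thesis by auto
qed

lemma min_sq_pos: "0 < min_sq \<Phi>"
  using min_sq_root root_nonzero by (metis inner_gt_zero_iff)

lemma long_root_cartan:
  assumes "b \<in> \<Phi>" "b \<bullet> b = max_sq \<Phi>" "e \<in> \<Phi>" "b \<bullet> e \<noteq> 0" "e \<noteq> b" "e \<noteq> - b"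
  shows "2 * \<bar>b \<bullet> e\<bar> = max_sq \<Phi>"
  using nonorthogonal_roots_cartan[OF assms(1,3,4) _ assms(5,6)] max_sq_ge assms(2,3) by simp

text \<open>Roots outside the span of a Weyl orbit are orthogonal to it, so irreducibility forces the
  span to contain all roots.\<close>
lemma span_weyl_orbit:
  assumes irreducible: "irreducible_rs \<Phi>" and a: "a \<in> \<Phi>"
  shows "span ((\<lambda>w. w a) ` W) = UNIV"
proof -
  let ?O = "(\<lambda>w. w a) ` W"
  let ?U = "span ?O"
  have orth: "g \<bullet> u = 0" if "g \<in> \<Phi>" "g \<notin> ?U" "u \<in> ?U" for g u
  proof -
    have "root_refl g u \<in> ?U" if "u \<in> ?O" for u
    proof -
      obtain w where "w \<in> W" "u = w a" using \<open>u \<in> ?O\<close> by blast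
      then have "root_refl g u = (root_refl g \<circ> w) a" "root_refl g \<circ> w \<in> W"
        using weyl_group.wg_step[OF \<open>g \<in> \<Phi>\<close>] by auto
      then show ?thesis by (metis image_eqI span_base)
    qed
    then have "\<forall>u\<in>?O. orthogonal g u"
      using orthogonal_if_root_refl_stable[of ?O g] that(2) unfolding orthogonal_def by blast
    then show ?thesis using orthogonal_to_span[OF that(3)] unfolding orthogonal_def by blast
  qed
  have "a \<in> \<Phi> \<inter> ?U" using a weyl_group.wg_id by (metis IntI id_apply image_eqI span_base)
  moreover have "\<forall>p\<in>\<Phi> \<inter> ?U. \<forall>q\<in>\<Phi> - ?U. p \<bullet> q = 0"
    using orth by (metis DiffE IntE inner_commute)
  ultimately have "\<Phi> - ?U = {}"
    using irreducible unfolding irreducible_rs_def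
    by (metis Int_Diff_Un empty_iff)
  then have "span \<Phi> \<subseteq> ?U" by (simp add: span_minimal)
  then show ?thesis using span_roots by auto
qed

lemma weyl_orbit_nonorthogonal:
  assumes "irreducible_rs \<Phi>" "a \<in> \<Phi>" "v \<noteq> 0"
  shows "\<exists>w\<in>W. w a \<bullet> v \<noteq> 0"
proof (rule ccontr)
  assume "\<not> ?thesis"
  then have "\<forall>u\<in>(\<lambda>w. w a) ` W. orthogonal v u" by (auto simp: orthogonal_def inner_commute)
  then have "orthogonal v v"
    using orthogonal_to_span span_weyl_orbit[OF assms(1,2)] by blast
  then show False using assms(3) by (simp add: orthogonal_def)
qed

lemma length_ratio_of_roots:
  assumes "irreducible_rs \<Phi>" "x \<in> \<Phi>" "y \<in> \<Phi>" "y \<bullet> y < x \<bullet> x"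
  shows "(x \<bullet> x) / (y \<bullet> y) \<in> {2, 3}"
proof -
  obtain w where w: "w \<in> W" "w y \<bullet> x \<noteq> 0"
    using weyl_orbit_nonorthogonal assms(1,3) root_nonzero[OF assms(2)] by blast
  have "w y \<in> \<Phi>" "w y \<bullet> w y = y \<bullet> y" using w weyl_root weyl_inner assms(3) by auto
  moreover have "w y \<noteq> x" "w y \<noteq> - x" using calculation(2) assms(4) by auto
  moreover have "x \<bullet> w y \<noteq> 0" using w(2) by (simp add: inner_commute)
  ultimately have "(x \<bullet> x) / (y \<bullet> y) \<in> {1, 2, 3}"
    using nonorthogonal_roots_cartan[OF assms(2)] assms(4) by (metis less_imp_le)
  moreover have "(x \<bullet> x) / (y \<bullet> y) \<noteq> 1" using assms(4) by simp
  ultimately show ?thesis by blast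
qed

text \<open>A third length would make the ratio of the extreme squared lengths at least \<open>2 \<cdot> 2\<close>,
  but that ratio is at most 3.\<close>
lemma root_length_cases:
  assumes "irreducible_rs \<Phi>" "b \<in> \<Phi>"
  shows "b \<bullet> b = max_sq \<Phi> \<or> b \<bullet> b = min_sq \<Phi>"
proof (rule ccontr)
  assume "\<not> ?thesis"
  then have lt: "min_sq \<Phi> < b \<bullet> b" "b \<bullet> b < max_sq \<Phi>"
    using max_sq_ge min_sq_le assms(2) by (auto simp: less_le)
  obtain x y where x: "x \<in> \<Phi>" "x \<bullet> x = max_sq \<Phi>" and y: "y \<in> \<Phi>" "y \<bullet> y = min_sq \<Phi>"
    using max_sq_root min_sq_root by blast
  have "max_sq \<Phi> / (b \<bullet> b) \<ge> 2" "(b \<bullet> b) / min_sq \<Phi> \<ge> 2" "max_sq \<Phi> / min_sq \<Phi> \<le> 3"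
    using length_ratio_of_roots[OF assms(1)] x y assms(2) lt by fastforce+
  moreover have "0 < b \<bullet> b" using root_nonzero assms(2) by simp
  ultimately show False using min_sq_pos lt by (simp add: field_simps)
qed

lemma max_sq_pos: "0 < max_sq \<Phi>"
  using min_sq_root min_sq_pos max_sq_ge by fastforce

lemma htv_eq:
  assumes "irreducible_rs \<Phi>"
  shows "htv \<Phi> \<Delta> v = (\<Sum>d\<in>\<Delta>. coeff v d * (d \<bullet> d)) / max_sq \<Phi>"
proof -
  let ?L = "long_simple \<Phi> \<Delta>" and ?S = "short_simple \<Phi> \<Delta>"
  have L: "?L = {d \<in> \<Delta>. d \<bullet> d = max_sq \<Phi>}" and S: "?S = {d \<in> \<Delta>. d \<bullet> d = min_sq \<Phi> \<and> d \<bullet> d \<noteq> max_sq \<Phi>}"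
    using root_length_cases[OF assms] simple_root
    by (auto simp: long_simple_def short_simple_def long_root_def)
  have "(\<Sum>d\<in>\<Delta>. coeff v d * (d \<bullet> d)) = (\<Sum>d\<in>?L. coeff v d * (d \<bullet> d)) + (\<Sum>d\<in>?S. coeff v d * (d \<bullet> d))"
    unfolding short_simple_def using sum.subset_diff[of ?L \<Delta>] finite_simple
    by (simp add: long_simple_def add.commute)
  also have "\<dots> = max_sq \<Phi> * (\<Sum>d\<in>?L. coeff v d) + min_sq \<Phi> * (\<Sum>d\<in>?S. coeff v d)"
    by (simp add: L S sum_distrib_left mult.commute)
  finally show ?thesis
    using max_sq_pos by (simp add: htv_def length_ratio_def field_simps)
qed

lemma htv_uminus: "irreducible_rs \<Phi> \<Longrightarrow> htv \<Phi> \<Delta> (- v) = - htv \<Phi> \<Delta> v"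
  by (simp add: htv_eq base_coeff_uminus sum_negf)

lemma htv_long_simple:
  assumes "irreducible_rs \<Phi>" "e \<in> \<Delta>" "e \<bullet> e = max_sq \<Phi>"
  shows "htv \<Phi> \<Delta> e = 1"
  using assms max_sq_pos
  by (simp add: htv_eq base_coeff_simple if_distrib[of "\<lambda>c. c * _"] sum.delta[OF finite_simple]
      cong: if_cong)

lemma htv_root_refl_simple:
  assumes "irreducible_rs \<Phi>" "e \<in> \<Delta>"
  shows "htv \<Phi> \<Delta> (root_refl e b) = htv \<Phi> \<Delta> b - 2 * (b \<bullet> e) / max_sq \<Phi>"
proof -
  let ?c = "2 * (b \<bullet> e) / (e \<bullet> e)"
  have "(\<Sum>d\<in>\<Delta>. coeff (root_refl e b) d * (d \<bullet> d))
      = (\<Sum>d\<in>\<Delta>. coeff b d * (d \<bullet> d)) - (\<Sum>d\<in>\<Delta>. if d = e then ?c * (e \<bullet> e) else 0)"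
    by (simp add: base_coeff_root_refl_simple[OF assms(2)] left_diff_distrib sum_subtractf
        if_distrib[of "\<lambda>c. c * _"] cong: if_cong)
  also have "\<dots> = (\<Sum>d\<in>\<Delta>. coeff b d * (d \<bullet> d)) - 2 * (b \<bullet> e)"
    using assms(2) simple_nonzero[OF assms(2)] by (simp add: sum.delta[OF finite_simple])
  finally show ?thesis using max_sq_pos by (simp add: htv_eq[OF assms(1)] diff_divide_distrib)
qed

lemma htv_root_refl_simple_long:
  assumes "irreducible_rs \<Phi>" and b: "b \<in> \<Phi>" "b \<bullet> b = max_sq \<Phi>" and d: "d \<in> \<Delta>"
    and "b \<bullet> d \<noteq> 0" "b \<noteq> d" "b \<noteq> - d"
  shows "htv \<Phi> \<Delta> (root_refl d b) = htv \<Phi> \<Delta> b - sgn (b \<bullet> d)"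
proof -
  have "2 * \<bar>b \<bullet> d\<bar> = max_sq \<Phi>"
    using long_root_cartan[OF b simple_root[OF d]] assms(5-7) by force
  then have "2 * (b \<bullet> d) / max_sq \<Phi> = sgn (b \<bullet> d)"
    using assms(5) max_sq_pos by (auto simp: sgn_if abs_if field_simps)
  then show ?thesis using htv_root_refl_simple[OF assms(1) d] by simp
qed

lemma dominant_in_weyl_orbit:
  assumes "b \<in> \<Phi>"
  shows "\<exists>w\<in>W. \<forall>d\<in>\<Delta>. 0 \<le> w b \<bullet> d"
proof -
  let ?O = "(\<lambda>w. w b) ` W"
  have "finite ?O" using weyl_root assms finite_roots by (auto intro: finite_subset)
  moreover have "b \<in> ?O" using weyl_group.wg_id by (metis id_apply image_eqI)
  ultimately have "Max (height ` ?O) \<in> height ` ?O" by (intro Max_in) auto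
  then obtain w where w: "w \<in> W" "height (w b) = Max (height ` ?O)" by auto
  have "0 \<le> w b \<bullet> d" if d: "d \<in> \<Delta>" for d
  proof -
    have "root_refl d (w b) \<in> ?O"
      using simple_comp_weyl[OF w(1) d] by (metis comp_apply image_eqI)
    then have "height (root_refl d (w b)) \<le> height (w b)"
      using w(2) \<open>finite ?O\<close> by simp
    then have "0 \<le> 2 * (w b \<bullet> d) / (d \<bullet> d)" using height_root_refl_simple[OF d] by simp
    then show ?thesis using simple_nonzero[OF d] by (simp add: zero_le_divide_iff)
  qed
  then show ?thesis using w(1) by blast
qed

end

section \<open>The highest root\<close>

locale irreducible_based_root_system = based_root_system +
  fixes \<alpha>h :: 'a
  assumes irreducible: "irreducible_rs \<Phi>" and highest_root: "highest_root \<Phi> \<Delta> \<alpha>h"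
begin

lemma highest_root_root: "\<alpha>h \<in> \<Phi>"
  using highest_root by (simp add: highest_root_def)

lemma highest_root_dominates: "b \<in> \<Phi> \<Longrightarrow> 0 \<le> coeff (\<alpha>h - b) d"
  using highest_root base_coeff_nonneg_comb by (simp add: highest_root_def)

lemma highest_root_pos: "\<alpha>h \<in> Pos"
proof -
  obtain b where "b \<in> Pos" using roots_nonempty root_pos_or_uminus_pos by blast
  then obtain d where d: "d \<in> \<Delta>" "0 < coeff b d" using pos_root_pos_coeff by blast
  then have "0 < coeff \<alpha>h d"
    using highest_root_dominates[OF pos_root_root[OF \<open>b \<in> Pos\<close>], of d] by (simp add: base_coeff_diff)
  then show ?thesis using pos_root_if_pos_coeff highest_root_root d(1) by blast
qed

lemma highest_root_dominant: "d \<in> \<Delta> \<Longrightarrow> 0 \<le> \<alpha>h \<bullet> d"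
  using highest_root_dominates[OF root_refl_root[OF simple_root highest_root_root], of d d]
    base_coeff_root_refl_simple simple_nonzero
  by (simp add: base_coeff_diff zero_le_divide_iff)

lemma inner_highest_root_pos_root: "b \<in> Pos \<Longrightarrow> 0 \<le> \<alpha>h \<bullet> b"
  by (simp add: inner_base_coeff[of \<alpha>h b] sum_nonneg pos_root_coeff_nonneg highest_root_dominant)

lemma inner_highest_root_neg_root: "b \<in> \<Phi> \<Longrightarrow> b \<notin> Pos \<Longrightarrow> \<alpha>h \<bullet> b \<le> 0"
  using inner_highest_root_pos_root[of "- b"] uminus_not_pos_root by fastforce

lemma dominant_root_inner_bounds:
  assumes c: "c \<in> \<Phi>" and dominant: "\<forall>d\<in>\<Delta>. 0 \<le> c \<bullet> d"
  shows "c \<bullet> c \<le> \<alpha>h \<bullet> c" and "\<alpha>h \<bullet> c \<le> \<alpha>h \<bullet> \<alpha>h"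
proof -
  have "0 \<le> c \<bullet> (\<alpha>h - c)" "0 \<le> \<alpha>h \<bullet> (\<alpha>h - c)"
    using highest_root_dominates[OF c] dominant highest_root_dominant
    by (simp_all add: inner_base_coeff[of _ "\<alpha>h - c"] sum_nonneg)
  then show "c \<bullet> c \<le> \<alpha>h \<bullet> c" "\<alpha>h \<bullet> c \<le> \<alpha>h \<bullet> \<alpha>h"
    by (simp_all add: inner_diff_right inner_commute)
qed

lemma highest_root_long: "\<alpha>h \<bullet> \<alpha>h = max_sq \<Phi>"
proof -
  obtain b where b: "b \<in> \<Phi>" "b \<bullet> b = max_sq \<Phi>" using max_sq_root by blast
  then obtain w where w: "w \<in> W" "\<forall>d\<in>\<Delta>. 0 \<le> w b \<bullet> d" using dominant_in_weyl_orbit by blast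
  have "w b \<in> \<Phi>" "w b \<bullet> w b = max_sq \<Phi>" using w(1) b weyl_root weyl_inner by auto
  then show ?thesis
    using dominant_root_inner_bounds[of "w b"] w(2) max_sq_ge[OF highest_root_root] by fastforce
qed

text \<open>The dominant long root \<open>c\<close> in the orbit satisfies \<open>|\<alpha>h - c|\<^sup>2 \<le> 0\<close>.\<close>
lemma weyl_transitive_long_roots:
  assumes b: "b \<in> \<Phi>" "b \<bullet> b = max_sq \<Phi>"
  shows "\<exists>w\<in>W. w \<alpha>h = b"
proof -
  obtain w where w: "w \<in> W" "\<forall>d\<in>\<Delta>. 0 \<le> w b \<bullet> d" using dominant_in_weyl_orbit b by blast
  let ?c = "w b"
  have "?c \<in> \<Phi>" "?c \<bullet> ?c = max_sq \<Phi>" using w(1) b weyl_root weyl_inner by auto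
  then have "(\<alpha>h - ?c) \<bullet> (\<alpha>h - ?c) \<le> 0"
    using dominant_root_inner_bounds[of ?c] w(2) highest_root_long
    by (simp add: inner_diff_left inner_diff_right inner_commute)
  then have "w b = \<alpha>h" by simp
  moreover obtain v where "v \<in> W" "v \<circ> w = id" using weyl_inverse[OF w(1)] by blast
  ultimately show ?thesis by (metis comp_apply id_apply)
qed

section \<open>Minimal coset representatives\<close>

abbreviation X :: "('a \<Rightarrow> 'a) set" where "X \<equiv> X_tilde \<Phi> \<Delta> \<alpha>h"

lemma X_iff: "w \<in> X \<longleftrightarrow> w \<in> W \<and> (\<forall>b\<in>Pos. b \<in> span (I_tilde \<Delta> \<alpha>h) \<longrightarrow> w b \<in> Pos)"
  by (auto simp: X_tilde_def)

lemma inner_highest_root_span_I: "x \<in> span (I_tilde \<Delta> \<alpha>h) \<Longrightarrow> \<alpha>h \<bullet> x = 0"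
  using orthogonal_to_span[of x "I_tilde \<Delta> \<alpha>h" \<alpha>h] by (auto simp: orthogonal_def I_tilde_def)

lemma pos_root_orthogonal_highest_root_support:
  assumes b: "b \<in> Pos" and orth: "\<alpha>h \<bullet> b = 0" and "coeff b d \<noteq> 0"
  shows "d \<in> I_tilde \<Delta> \<alpha>h"
proof -
  have d: "d \<in> \<Delta>" using base_coeff_outside assms(3) by blast
  have "\<forall>d\<in>\<Delta>. coeff b d * (\<alpha>h \<bullet> d) = 0"
    using orth inner_base_coeff[of \<alpha>h b] finite_simple pos_root_coeff_nonneg[OF b]
      highest_root_dominant by (simp add: sum_nonneg_eq_0_iff)
  then have "coeff b d * (\<alpha>h \<bullet> d) = 0" using d by blast
  then have "\<alpha>h \<bullet> d = 0" using assms(3) by simp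
  then show ?thesis using d by (simp add: I_tilde_def)
qed

lemma pos_root_orthogonal_highest_root:
  assumes b: "b \<in> Pos" and orth: "\<alpha>h \<bullet> b = 0"
  shows "b \<in> span (I_tilde \<Delta> \<alpha>h)"
proof -
  have "coeff b d *\<^sub>R d \<in> span (I_tilde \<Delta> \<alpha>h)" for d
    using pos_root_orthogonal_highest_root_support[OF b orth, of d]
    by (cases "coeff b d = 0") (auto intro: span_scale span_base span_zero)
  then have "(\<Sum>d\<in>\<Delta>. coeff b d *\<^sub>R d) \<in> span (I_tilde \<Delta> \<alpha>h)" by (intro span_sum)
  then show ?thesis using base_coeff_sum[of b] by simp
qed

lemma X_simple_comp:
  assumes w: "w \<in> X" and d: "d \<in> \<Delta>" and g: "g \<in> \<Phi>" "w g = d" "g \<notin> Pos"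
  shows "root_refl d \<circ> w \<in> X"
proof -
  have wW: "w \<in> W" using w X_iff by blast
  have "root_refl d (w b) \<in> Pos" if b: "b \<in> Pos" "b \<in> span (I_tilde \<Delta> \<alpha>h)" for b
  proof -
    have "w b \<in> Pos" using w b X_iff by blast
    moreover have "w b \<noteq> d" using weyl_inj[OF wW] g b by (metis injD)
    ultimately show ?thesis using root_refl_simple_pos_root[OF d] by blast
  qed
  then show ?thesis using X_iff simple_comp_weyl[OF wW d] by auto
qed

lemma X_descent:
  assumes w: "w \<in> X" and "w \<noteq> id"
  obtains d g where "d \<in> \<Delta>" "g \<in> \<Phi>" "w g = d" "g \<notin> Pos" "w \<alpha>h \<bullet> d < 0"
proof -
  have wW: "w \<in> W" using w X_iff by blast
  obtain v where v: "v \<in> W" "v \<circ> w = id" "w \<circ> v = id" using weyl_inverse[OF wW] by blast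
  then obtain d where d: "d \<in> \<Delta>" "v d \<notin> Pos"
    using weyl_eq_id_if_simple_pos \<open>w \<noteq> id\<close> by (metis comp_id)
  let ?g = "v d"
  have g: "?g \<in> \<Phi>" "w ?g = d" using v d weyl_root simple_root by (auto simp: pointfree_idE)
  have "w \<alpha>h \<bullet> d = \<alpha>h \<bullet> ?g" using weyl_inner[OF wW, of \<alpha>h ?g] g by simp
  moreover have "\<alpha>h \<bullet> ?g \<le> 0" using inner_highest_root_neg_root g d by blast
  moreover have "\<alpha>h \<bullet> ?g \<noteq> 0"
  proof
    assume "\<alpha>h \<bullet> ?g = 0"
    then have "- ?g \<in> span (I_tilde \<Delta> \<alpha>h)" "- ?g \<in> Pos"
      using pos_root_orthogonal_highest_root uminus_not_pos_root g d by auto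
    then have "w (- ?g) \<in> Pos" using w X_iff by blast
    then show False using weyl_uminus[OF wW] g uminus_pos_root simple_pos_root d by simp
  qed
  ultimately show thesis using that d g by force
qed

text \<open>Induction on the number of inversions: by \<open>X_descent\<close>, \<open>w = s\<^sub>d \<circ> w'\<close> with
  \<open>w' \<in> X\<close> having one inversion less, and \<open>s\<^sub>d\<close> lowers the dual height of \<open>w' \<alpha>h\<close> by one
  unless \<open>w \<alpha>h = - d\<close>.\<close>
lemma num_inversions_X:
  "w \<in> X \<Longrightarrow> real (num_inversions w)
     = htv \<Phi> \<Delta> \<alpha>h - htv \<Phi> \<Delta> (w \<alpha>h) - (if w \<alpha>h \<in> Pos then 0 else 1)"
proof (induction "num_inversions w" arbitrary: w rule: less_induct)
  case less
  have wW: "w \<in> W" using less.prems X_iff by blast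
  show ?case
  proof (cases "w = id")
    case True
    then show ?thesis using highest_root_pos by simp
  next
    case False
    then obtain d g where d: "d \<in> \<Delta>" and g: "g \<in> \<Phi>" "w g = d" "g \<notin> Pos"
      and neg: "w \<alpha>h \<bullet> d < 0"
      using X_descent[OF less.prems] by blast
    let ?w = "root_refl d \<circ> w" and ?b = "w \<alpha>h"
    have IH: "real (num_inversions ?w)
        = htv \<Phi> \<Delta> \<alpha>h - htv \<Phi> \<Delta> (?w \<alpha>h) - (if ?w \<alpha>h \<in> Pos then 0 else 1)"
      using less.hyps num_inversions_simple_comp_neg[OF wW d g] X_simple_comp[OF less.prems d g]
      by fastforce
    have N: "num_inversions ?w + 1 = num_inversions w"
      using num_inversions_simple_comp_neg[OF wW d g] .
    have b: "?b \<in> \<Phi>" "?b \<bullet> ?b = max_sq \<Phi>"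
      using weyl_root[OF wW highest_root_root] weyl_inner[OF wW] highest_root_long by auto
    have "?b \<noteq> d" using neg inner_ge_zero[of d] by (metis not_le)
    show ?thesis
    proof (cases "?b = - d")
      case True
      then have "?w \<alpha>h = d" "d \<bullet> d = max_sq \<Phi>"
        using b root_refl_self[OF simple_nonzero[OF d]] by (auto simp: root_refl_uminus)
      then show ?thesis
        using IH N True d simple_pos_root uminus_pos_root htv_long_simple[OF irreducible d]
          htv_uminus[OF irreducible] by simp
    next
      case False
      have "htv \<Phi> \<Delta> (?w \<alpha>h) = htv \<Phi> \<Delta> ?b + 1"
        using htv_root_refl_simple_long[OF irreducible b d] neg \<open>?b \<noteq> d\<close> False by simp
      moreover have "?w \<alpha>h \<in> Pos \<longleftrightarrow> ?b \<in> Pos"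
        using root_refl_simple_pos_root_iff[OF d b(1)] \<open>?b \<noteq> d\<close> False by simp
      ultimately show ?thesis using IH N by simp
    qed
  qed
qed

lemma X_inj_on_highest_root:
  "w \<in> X \<Longrightarrow> w' \<in> X \<Longrightarrow> w \<alpha>h = w' \<alpha>h \<Longrightarrow> w = w'"
proof (induction "num_inversions w" arbitrary: w w' rule: less_induct)
  case less
  have wW: "w \<in> W" and wW': "w' \<in> W" using less.prems X_iff by auto
  show ?case
  proof (cases "w = id")
    case True
    then have "num_inversions w' = 0"
      using num_inversions_X[OF less.prems(2)] less.prems(3) highest_root_pos by simp
    then have "\<forall>d\<in>\<Delta>. w' d \<in> Pos"
      using finite_inversions simple_pos_root by (auto simp: num_inversions_def inversions_def)
    then show ?thesis using True weyl_eq_id_if_simple_pos[OF wW'] by simp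
  next
    case False
    obtain d g where d: "d \<in> \<Delta>" and g: "g \<in> \<Phi>" "w g = d" "g \<notin> Pos"
      and neg: "w \<alpha>h \<bullet> d < 0"
      using X_descent[OF less.prems(1) False] by blast
    obtain g' where g': "g' \<in> \<Phi>" "w' g' = d" using weyl_surj_root[OF wW' simple_root[OF d]] by blast
    have "\<alpha>h \<bullet> g' < 0"
      using weyl_inner[OF wW', of \<alpha>h g'] g' neg less.prems(3) by simp
    then have "g' \<notin> Pos" using inner_highest_root_pos_root by force
    have "root_refl d \<circ> w = root_refl d \<circ> w'"
      using less.hyps[OF _ X_simple_comp[OF less.prems(1) d g] X_simple_comp[OF less.prems(2) d g'
            \<open>g' \<notin> Pos\<close>]] num_inversions_simple_comp_neg[OF wW d g] less.prems(3)
      by fastforce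
    then show ?thesis
      using root_refl_comp_self[OF simple_nonzero[OF d]] by (metis comp_assoc id_comp)
  qed
qed

text \<open>An element of minimal length sending \<open>\<alpha>h\<close> to \<open>b\<close> lies in \<open>X\<close>: otherwise some
  simple root orthogonal to \<open>\<alpha>h\<close> is an inversion, and its reflection, which fixes \<open>\<alpha>h\<close>,
  shortens the element.\<close>
lemma X_exists:
  assumes b: "b \<in> \<Phi>" "b \<bullet> b = max_sq \<Phi>"
  shows "\<exists>w\<in>X. w \<alpha>h = b"
proof -
  obtain w where w: "w \<in> W" "w \<alpha>h = b"
    and min: "\<And>u. u \<in> W \<Longrightarrow> u \<alpha>h = b \<Longrightarrow> num_inversions w \<le> num_inversions u"
    using ex_has_least_nat[of "\<lambda>w. w \<in> W \<and> w \<alpha>h = b" _ num_inversions]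
      weyl_transitive_long_roots[OF b] by metis
  have "w \<in> X"
  proof (rule ccontr)
    assume "w \<notin> X"
    then obtain g where g: "g \<in> Pos" "g \<in> span (I_tilde \<Delta> \<alpha>h)" "w g \<notin> Pos"
      using w X_iff by blast
    have "\<exists>e\<in>I_tilde \<Delta> \<alpha>h. w e \<notin> Pos"
    proof (rule ccontr)
      assume "\<not> ?thesis"
      then have "\<forall>d\<in>\<Delta>. coeff g d \<noteq> 0 \<longrightarrow> w d \<in> Pos"
        using pos_root_orthogonal_highest_root_support[OF g(1)] inner_highest_root_span_I g(2)
        by blast
      then show False
        using linear_image_pos_root orthogonal_transformation_linear orthogonal_transformation_weyl
          w(1) g weyl_root pos_root_root by blast
    qed
    then obtain e where e: "e \<in> \<Delta>" "\<alpha>h \<bullet> e = 0" "w e \<notin> Pos" by (auto simp: I_tilde_def)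
    have "(w \<circ> root_refl e) \<alpha>h = b"
      using root_refl_orthogonal[of \<alpha>h e] e(2) w(2) by (simp add: inner_commute)
    then have "num_inversions w \<le> num_inversions (w \<circ> root_refl e)"
      using min weyl_comp_simple[OF w(1) e(1)] by blast
    then show False using num_inversions_comp_simple_neg[OF w(1) e(1,3)] by simp
  qed
  then show ?thesis using w by blast
qed

lemma x_elem:
  assumes "b \<in> \<Phi>" "b \<bullet> b = max_sq \<Phi>"
  shows "x_elem \<Phi> \<Delta> \<alpha>h b \<in> X" and "x_elem \<Phi> \<Delta> \<alpha>h b \<alpha>h = b"
proof -
  have "\<exists>!w. w \<in> X \<and> w \<alpha>h = b" using X_exists[OF assms] X_inj_on_highest_root by blast
  then have "x_elem \<Phi> \<Delta> \<alpha>h b \<in> X \<and> x_elem \<Phi> \<Delta> \<alpha>h b \<alpha>h = b"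
    unfolding x_elem_def by (rule theI')
  then show "x_elem \<Phi> \<Delta> \<alpha>h b \<in> X" "x_elem \<Phi> \<Delta> \<alpha>h b \<alpha>h = b" by blast+
qed

section \<open>Length of a long root reflection\<close>

text \<open>Induction on the height: for non-simple \<open>a\<close> pick a simple \<open>d\<close> with \<open>a \<bullet> d > 0\<close>;
  then \<open>s\<^sub>a = s\<^sub>d s\<^bsub>a'\<^esub> s\<^sub>d\<close> with \<open>a' = s\<^sub>d a\<close> of dual height one less, and
  conjugation by \<open>s\<^sub>d\<close> adds two inversions.\<close>
lemma num_inversions_root_refl:
  "a \<in> Pos \<Longrightarrow> a \<bullet> a = max_sq \<Phi> \<Longrightarrow> real (num_inversions (root_refl a)) = 2 * htv \<Phi> \<Delta> a - 1"
proof (induction "nat \<lceil>height a\<rceil>" arbitrary: a rule: less_induct)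
  case less
  have a: "a \<in> \<Phi>" "a \<noteq> 0" using less.prems pos_root_root root_nonzero by auto
  show ?case
  proof (cases "a \<in> \<Delta>")
    case True
    have "inversions (root_refl a) = {a}"
      using root_refl_simple_pos_root_iff[OF True] uminus_pos_root less.prems(1) root_refl_self[OF a(2)]
      by (auto simp: inversions_def dest: pos_root_root)
    then show ?thesis using htv_long_simple[OF irreducible True less.prems(2)]
      by (simp add: num_inversions_def)
  next
    case False
    then obtain d where d: "d \<in> \<Delta>" "0 < a \<bullet> d" and a'_pos: "root_refl d a \<in> Pos"
      and lt: "nat \<lceil>height (root_refl d a)\<rceil> < nat \<lceil>height a\<rceil>"
      using pos_root_height_descent less.prems(1) by blast
    let ?a' = "root_refl d a"
    have d0: "d \<noteq> 0" using simple_nonzero d by blast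
    have a'_long: "?a' \<bullet> ?a' = max_sq \<Phi>" using inner_root_refl[OF d0] less.prems(2) by simp
    have "a \<noteq> d" "a \<noteq> - d"
      using False d uminus_pos_root[OF simple_pos_root] less.prems(1) by auto
    then have htv_a': "htv \<Phi> \<Delta> ?a' = htv \<Phi> \<Delta> a - 1"
      using htv_root_refl_simple_long[OF irreducible a(1) less.prems(2) d(1)] d(2) by simp
    have "d \<bullet> ?a' < 0"
      using inner_root_refl[OF d0, of d a] root_refl_self[OF d0] d(2) by (simp add: inner_commute)
    then have c: "root_refl ?a' d \<in> Pos" "root_refl ?a' d \<noteq> d"
      using root_refl_pos_root_simple[OF a'_pos d(1)] by blast+
    have "root_refl a = root_refl d \<circ> root_refl ?a' \<circ> root_refl d"
      using root_refl_conj_root_refl[OF d0, of ?a'] root_refl_root_refl[OF d0] by simp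
    then have "num_inversions (root_refl a) = num_inversions (root_refl ?a') + 2"
      using num_inversions_conj_simple[OF root_refl_weyl_group _ d(1) c]
        root_refl_comp_self pos_root_root a'_pos root_nonzero by metis
    then show ?thesis using less.hyps[OF lt a'_pos a'_long] htv_a' by simp
  qed
qed

theorem weyl_length_x_elem:
  assumes "b \<in> \<Phi>" "b \<bullet> b = max_sq \<Phi>"
  shows "real (weyl_length \<Delta> (x_elem \<Phi> \<Delta> \<alpha>h b))
    = htv \<Phi> \<Delta> \<alpha>h - htv \<Phi> \<Delta> b - (if b \<in> Pos then 0 else 1)"
  using x_elem[OF assms] num_inversions_X weyl_length_eq_num_inversions X_iff by metis

theorem weyl_length_root_refl:
  assumes "a \<in> Pos" "a \<bullet> a = max_sq \<Phi>"
  shows "real (weyl_length \<Delta> (root_refl a)) = 2 * htv \<Phi> \<Delta> a - 1"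
  using num_inversions_root_refl[OF assms] weyl_length_eq_num_inversions root_refl_weyl_group
    pos_root_root[OF assms(1)] by metis

end

theorem proposition1p8:
  fixes \<Phi> \<Delta> :: "'a::euclidean_space set" and \<alpha>h \<alpha> :: 'a
  assumes "root_system \<Phi>" and "reduced_rs \<Phi>" and "irreducible_rs \<Phi>"
    and "is_base \<Phi> \<Delta>" and "highest_root \<Phi> \<Delta> \<alpha>h"
    and "\<alpha> \<in> pos_roots \<Phi> \<Delta>" and "long_root \<Phi> \<alpha>"
  shows "real (weyl_length \<Delta> (x_elem \<Phi> \<Delta> \<alpha>h \<alpha>))
           = (real (weyl_length \<Delta> (root_refl \<alpha>h)) - real (weyl_length \<Delta> (root_refl \<alpha>))) / 2
       \<and> real (weyl_length \<Delta> (x_elem \<Phi> \<Delta> \<alpha>h \<alpha>)) = htv \<Phi> \<Delta> \<alpha>h - htv \<Phi> \<Delta> \<alpha>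
       \<and> real (weyl_length \<Delta> (x_elem \<Phi> \<Delta> \<alpha>h (- \<alpha>)))
           = (real (weyl_length \<Delta> (root_refl \<alpha>h)) + real (weyl_length \<Delta> (root_refl \<alpha>))) / 2
       \<and> real (weyl_length \<Delta> (x_elem \<Phi> \<Delta> \<alpha>h (- \<alpha>))) = htv \<Phi> \<Delta> \<alpha>h + htv \<Phi> \<Delta> \<alpha> - 1"
proof -
  interpret irreducible_based_root_system \<Phi> \<Delta> \<alpha>h
    using assms(1-5) by unfold_locales
  have \<alpha>: "\<alpha> \<in> \<Phi>" "\<alpha> \<bullet> \<alpha> = max_sq \<Phi>" "- \<alpha> \<in> \<Phi>" "- \<alpha> \<notin> pos_roots \<Phi> \<Delta>"
    using assms(6,7) uminus_root uminus_pos_root by (auto simp: long_root_def pos_roots_def)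
  show ?thesis
    using weyl_length_x_elem[of \<alpha>] weyl_length_x_elem[of "- \<alpha>"] \<alpha> assms(6)
      weyl_length_root_refl[of \<alpha>] weyl_length_root_refl[OF highest_root_pos highest_root_long]
      htv_uminus[OF irreducible]
    by simp
qed

end
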